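(* Let $N$, $\mathfrak h$, $\alpha_i$, $\mathcal A$, $F$, $v_1,\dots,v_r$ be as in the context. Problem 1 has a solution if and only if Problem 2 has a solution.
   Context: A generalised Cartan matrix is $N=[n(i,j)]_{1\le i,j\le r}$ with $n(i,j)\in\mathbb Z$, $n(i,i)=2$, $n(i,j)\le 0$ for $i\neq j$, and $n(i,j)=0\iff n(j,i)=0$. Let $s$ be the corank of $N$, $\mathfrak h$ the complex vector space with basis $H_1,\dots,H_{r+s}$, and $\alpha_1,\dots,\alpha_r\in\mathfrak h^*$ linearly independent with $\alpha_j(H_i)=n(i,j)$ for $1\le i,j\le r$. $\mathcal A$ is a complex commutative algebra, $\mathrm{Der}(\mathcal A)$ its Lie algebra of derivations; for $a\in\mathcal A$, $D\in\mathrm{Der}(\mathcal A)$, $aD$ is $b\mapsto aD(b)$. $F:\mathfrak h\to\mathrm{Der}(\mathcal A)$ is a Lie algebra homomorphism and $v_1,\dots,v_r\in\mathcal A$ are invertible with $F(H)(v_i)=\alpha_i(H)v_i$ for all $H\in\mathfrak h$. For $\delta_1,\dots,\delta_r,\delta_{-1},\dots,\delta_{-r}\in\mathrm{Im}\,F$ put $\mathbf X_i=v_i\delta_i$, $\mathbf X_{-i}=v_i^{-1}\delta_{-i}$, $\mathbf H_a=F(H_a)$, and consider the relations: (a) $[\mathbf H_a,\mathbf H_b]=0$; (b) $[\mathbf X_i,\mathbf X_{-i}]=\mathbf H_i$ and $[\mathbf X_i,\mathbf X_{-j}]=0$ for $i\ne j$; (c) $[\mathbf H_a,\mathbf X_{\pm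 j}]=\pm\alpha_j(H_a)\mathbf X_{\pm j}$; (d) $\mathrm{ad}(\mathbf X_i)^{1-n(i,j)}(\mathbf X_j)=0$ for $i\ne j$; (e) $\mathrm{ad}(\mathbf X_{-i})^{1-n(i,j)}(\mathbf X_{-j})=0$ for $i\ne j$. Problem 1 has a solution if such $\delta$'s exist satisfying (a)–(e); Problem 2 has a solution if such $\delta$'s exist satisfying (a)–(c). *)

theory Defs
  imports Complex_Main
begin

text \<open>Indices are 0-based: i,j range over {..<r}; the basis H_0..H_{r+s-1} of h
  is indexed by a < r+s.\<close>

definition gen_cartan :: "nat \<Rightarrow> (nat \<Rightarrow> nat \<Rightarrow> int) \<Rightarrow> bool" where
  "gen_cartan r N \<longleftrightarrow>
     (\<forall>i<r. N i i = 2) \<and>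
     (\<forall>i<r. \<forall>j<r. i \<noteq> j \<longrightarrow> N i j \<le> 0) \<and>
     (\<forall>i<r. \<forall>j<r. N i j = 0 \<longleftrightarrow> N j i = 0)"

definition lin_indep_fam :: "(nat \<Rightarrow> nat \<Rightarrow> complex) \<Rightarrow> nat set \<Rightarrow> nat \<Rightarrow> bool" where
  "lin_indep_fam u S m \<longleftrightarrow>
     (\<forall>c. (\<forall>k<m. (\<Sum>i\<in>S. c i * u i k) = 0) \<longrightarrow> (\<forall>i\<in>S. c i = 0))"

definition mat_rank :: "nat \<Rightarrow> (nat \<Rightarrow> nat \<Rightarrow> int) \<Rightarrow> nat" where
  "mat_rank r N = Max {card S | S. S \<subseteq> {..<r} \<and>
                         lin_indep_fam (\<lambda>j k. of_int (N k j)) S r}"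

definition corank :: "nat \<Rightarrow> (nat \<Rightarrow> nat \<Rightarrow> int) \<Rightarrow> nat" where
  "corank r N = r - mat_rank r N"

text \<open>A complex commutative (unital) algebra: a commutative ring with a ring
  homomorphism emb from C (scalar multiplication z.x = emb z * x).\<close>
definition cplx_alg :: "(complex \<Rightarrow> 'a::comm_ring_1) \<Rightarrow> bool" where
  "cplx_alg emb \<longleftrightarrow> emb 1 = 1 \<and> (\<forall>x y. emb (x + y) = emb x + emb y) \<and>
                     (\<forall>x y. emb (x * y) = emb x * emb y)"

definition is_der :: "(complex \<Rightarrow> 'a::comm_ring_1) \<Rightarrow> ('a \<Rightarrow> 'a) \<Rightarrow> bool" where
  "is_der emb D \<longleftrightarrow> (\<forall>x y. D (x + y) = D x + D y) \<and>
                     (\<forall>z x. D (emb z * x) = emb z * D x) \<and>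
                     (\<forall>x y. D (x * y) = x * D y + y * D x)"

definition lb :: "('a::comm_ring_1 \<Rightarrow> 'a) \<Rightarrow> ('a \<Rightarrow> 'a) \<Rightarrow> ('a \<Rightarrow> 'a)" where
  "lb P Q = (\<lambda>x. P (Q x) - Q (P x))"

definition mulD :: "'a::comm_ring_1 \<Rightarrow> ('a \<Rightarrow> 'a) \<Rightarrow> ('a \<Rightarrow> 'a)" where
  "mulD a D = (\<lambda>b. a * D b)"

definition rinv :: "'a::comm_ring_1 \<Rightarrow> 'a" where
  "rinv x = (THE y. x * y = 1)"

text \<open>The linear map F : h -> Der(A), given by its values D a = F(H_a) on the basis;
  an element H = sum_a c a H_a of h is given by its coordinates c.\<close>
definition Fmap :: "(complex \<Rightarrow> 'a::comm_ring_1) \<Rightarrow> nat \<Rightarrow> (nat \<Rightarrow> 'a \<Rightarrow> 'a)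
                    \<Rightarrow> (nat \<Rightarrow> complex) \<Rightarrow> ('a \<Rightarrow> 'a)" where
  "Fmap emb n D c = (\<lambda>x. \<Sum>a<n. emb (c a) * D a x)"

definition ImF :: "(complex \<Rightarrow> 'a::comm_ring_1) \<Rightarrow> nat \<Rightarrow> (nat \<Rightarrow> 'a \<Rightarrow> 'a) \<Rightarrow> ('a \<Rightarrow> 'a) set" where
  "ImF emb n D = {Fmap emb n D c | c. True}"

text \<open>Relations (a)-(c). alpha j a = alpha_j(H_a); dp i = delta_i, dm i = delta_{-i}.\<close>
definition rels_abc ::
  "(complex \<Rightarrow> 'a::comm_ring_1) \<Rightarrow> nat \<Rightarrow> nat \<Rightarrow> (nat \<Rightarrow> 'a \<Rightarrow> 'a) \<Rightarrow> (nat \<Rightarrow> nat \<Rightarrow> complex)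
   \<Rightarrow> (nat \<Rightarrow> 'a) \<Rightarrow> (nat \<Rightarrow> 'a \<Rightarrow> 'a) \<Rightarrow> (nat \<Rightarrow> 'a \<Rightarrow> 'a) \<Rightarrow> bool" where
  "rels_abc emb r s D alpha v dp dm \<longleftrightarrow>
     (let X = (\<lambda>i. mulD (v i) (dp i)); Y = (\<lambda>i. mulD (rinv (v i)) (dm i)) in
     (\<forall>a<r+s. \<forall>b<r+s. lb (D a) (D b) = (\<lambda>_. 0)) \<and>
     (\<forall>i<r. lb (X i) (Y i) = D i) \<and>
     (\<forall>i<r. \<forall>j<r. i \<noteq> j \<longrightarrow> lb (X i) (Y j) = (\<lambda>_. 0)) \<and>
     (\<forall>a<r+s. \<forall>j<r. lb (D a) (X j) = mulD (emb (alpha j a)) (X j) \<and>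
                     lb (D a) (Y j) = mulD (emb (- alpha j a)) (Y j)))"

definition rels_de ::
  "nat \<Rightarrow> (nat \<Rightarrow> nat \<Rightarrow> int) \<Rightarrow> (nat \<Rightarrow> 'a::comm_ring_1)
   \<Rightarrow> (nat \<Rightarrow> 'a \<Rightarrow> 'a) \<Rightarrow> (nat \<Rightarrow> 'a \<Rightarrow> 'a) \<Rightarrow> bool" where
  "rels_de r N v dp dm \<longleftrightarrow>
     (let X = (\<lambda>i. mulD (v i) (dp i)); Y = (\<lambda>i. mulD (rinv (v i)) (dm i)) in
     (\<forall>i<r. \<forall>j<r. i \<noteq> j \<longrightarrow> (lb (X i) ^^ nat (1 - N i j)) (X j) = (\<lambda>_. 0)) \<and>
     (\<forall>i<r. \<forall>j<r. i \<noteq> j \<longrightarrow> (lb (Y i) ^^ nat (1 - N i j)) (Y j) = (\<lambda>_. 0)))"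

definition problem1 where
  "problem1 emb r s N D alpha v \<longleftrightarrow>
     (\<exists>dp dm. (\<forall>i<r. dp i \<in> ImF emb (r+s) D \<and> dm i \<in> ImF emb (r+s) D) \<and>
              rels_abc emb r s D alpha v dp dm \<and> rels_de r N v dp dm)"

definition problem2 where
  "problem2 emb r s D alpha v \<longleftrightarrow>
     (\<exists>dp dm. (\<forall>i<r. dp i \<in> ImF emb (r+s) D \<and> dm i \<in> ImF emb (r+s) D) \<and>
              rels_abc emb r s D alpha v dp dm)"

end

theory Submission
  imports Defs
begin

text \<open>Write \<open>\<delta>\<^sub>i = F(h\<^sub>i)\<close>, \<open>\<delta>\<^sub>-\<^sub>i = F(k\<^sub>i)\<close> and \<open>w\<^sub>i = v\<^sub>i\<^sup>-\<^sup>1\<close>.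
  Since the image of \<open>F\<close> is abelian and every \<open>v\<^sub>l\<close> is a weight vector, operators \<open>u F(c)\<close> with \<open>u\<close> a
  weight vector are closed under brackets: \<open>[u F(c), u' F(d)] = u u' F(\<mu> d - \<nu> c)\<close> where
  \<open>F(c) u' = \<mu> u'\<close> and \<open>F(d) u = \<nu> u\<close>. Evaluating relation (b) on the invertible \<open>v\<^sub>l\<close> thus gives
  scalar identities among the numbers \<open>\<alpha>\<^sub>l(h\<^sub>i)\<close>, \<open>\<alpha>\<^sub>l(k\<^sub>j)\<close>. They force \<open>\<alpha>\<^sub>j(h\<^sub>i)\<close> to be
  \<open>0\<close> or \<open>-\<alpha>\<^sub>i(h\<^sub>i)\<close>, and \<open>n(i,j) = -[\<alpha>\<^sub>j(h\<^sub>i) \<noteq> 0] - [\<alpha>\<^sub>i(h\<^sub>j) \<noteq> 0]\<close> for \<open>i \<noteq> j\<close>.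
  Iterating the bracket formula, \<open>ad(X\<^sub>i)\<^sup>m X\<^sub>j = v\<^sub>i\<^sup>m v\<^sub>j F(G\<^sub>m)\<close> with \<open>G\<^sub>m\<close> in the span of
  \<open>h\<^sub>i, h\<^sub>j\<close>, and a direct computation gives \<open>G\<^sub>m = 0\<close> for \<open>m = 1 - n(i,j)\<close>; likewise for the
  \<open>Y\<^sub>i\<close>.\<close>

text \<open>\<open>root_val n \<beta> c\<close> is \<open>\<beta>(H)\<close> for the element \<open>H = \<Sum>\<^sub>a c\<^sub>a H\<^sub>a\<close>.\<close>

definition root_val :: "nat \<Rightarrow> (nat \<Rightarrow> complex) \<Rightarrow> (nat \<Rightarrow> complex) \<Rightarrow> complex" where
  "root_val n \<beta> c = (\<Sum>a<n. c a * \<beta> a)"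

lemma root_val_diff_scaled:
  "root_val n \<beta> (\<lambda>a. x * c a - y * d a) = x * root_val n \<beta> c - y * root_val n \<beta> d"
  by (simp add: root_val_def sum_subtractf sum_distrib_left algebra_simps)

lemma root_val_uminus: "root_val n (\<lambda>a. - \<beta> a) c = - root_val n \<beta> c"
  by (simp add: root_val_def sum_negf)

text \<open>The coefficients \<open>G m\<close> in \<open>ad(u F(g))\<^sup>m (u\<^sub>0 F(g\<^sub>0)) = u\<^sup>m u\<^sub>0 F(G m)\<close>,
  where \<open>F(c) u = \<mu>(c) u\<close> and \<open>F(g) u\<^sub>0 = p u\<^sub>0\<close>.\<close>
primrec ad_power_coeff ::
  "((nat \<Rightarrow> complex) \<Rightarrow> complex) \<Rightarrow> complex \<Rightarrow> (nat \<Rightarrow> complex) \<Rightarrow> (nat \<Rightarrow> complex)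
   \<Rightarrow> nat \<Rightarrow> nat \<Rightarrow> complex" where
  "ad_power_coeff \<mu> p g g\<^sub>0 0 = g\<^sub>0"
| "ad_power_coeff \<mu> p g g\<^sub>0 (Suc m) =
     (\<lambda>a. (p + of_nat m * \<mu> g) * ad_power_coeff \<mu> p g g\<^sub>0 m a - \<mu> (ad_power_coeff \<mu> p g g\<^sub>0 m) * g a)"

lemma ad_power_coeff_vanishes:
  fixes n :: nat and \<beta> g g\<^sub>0 :: "nat \<Rightarrow> complex" and p :: complex
  defines "G \<equiv> ad_power_coeff (root_val n \<beta>) p g g\<^sub>0"
  assumes p: "p * (p + root_val n \<beta> g) = 0"
  shows "G (1 + of_bool (p \<noteq> 0) + of_bool (root_val n \<beta> g\<^sub>0 \<noteq> 0)) = (\<lambda>_. 0)"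
proof -
  let ?A = "root_val n \<beta> g" and ?p' = "root_val n \<beta> g\<^sub>0"
  have G1: "G 1 = (\<lambda>a. p * g\<^sub>0 a - ?p' * g a)"
    by (simp add: G_def)
  have G2: "G 2 = (\<lambda>a. - (2 * p * ?p') * g a)"
  proof
    fix a
    have "G 2 a = (p + ?A) * (p * g\<^sub>0 a - ?p' * g a) - (p * ?p' - ?p' * ?A) * g a"
      using G1 by (simp add: G_def numeral_eq_Suc root_val_diff_scaled)
    also have "\<dots> = p * (p + ?A) * g\<^sub>0 a - 2 * p * ?p' * g a"
      by (simp add: algebra_simps)
    finally show "G 2 a = - (2 * p * ?p') * g a"
      using p by simp
  qed
  have G3: "G 3 = (\<lambda>a. - 2 * ?p' * (p * (p + ?A)) * g a)"
  proof
    fix a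
    have "G 3 a = (p + 2 * ?A) * (- (2 * p * ?p') * g a) - (- (2 * p * ?p') * ?A) * g a"
      using G2 root_val_diff_scaled[of n \<beta> "- (2 * p * ?p')" g 0 g]
      by (simp add: G_def numeral_eq_Suc)
    then show "G 3 a = - 2 * ?p' * (p * (p + ?A)) * g a"
      by (simp add: algebra_simps)
  qed
  show ?thesis
    using G1 G2 G3 p by (cases "p = 0"; cases "?p' = 0") (simp_all add: numeral_eq_Suc)
qed

lemma rinv_eqI:
  fixes x y :: "'a::comm_ring_1"
  assumes "x * y = 1"
  shows "rinv x = y"
  unfolding rinv_def
proof (rule the_equality)
  fix z assume "x * z = 1"
  then show "z = y"
    by (metis assms mult.left_commute mult_1_right)
qed (fact assms)

lemma mulD_unit_eq_zero:
  fixes u u' :: "'a::comm_ring_1"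
  assumes "u * u' = 1" and "mulD u P = (\<lambda>_. 0)"
  shows "P = (\<lambda>_. 0)"
proof
  fix x
  have "u' * (u * P x) = 0" using assms(2) by (simp add: mulD_def fun_eq_iff)
  then show "P x = 0"
    using assms(1) by (metis mult.assoc mult.commute mult_1_left)
qed

locale commuting_derivations =
  fixes emb :: "complex \<Rightarrow> 'a::comm_ring_1" and n :: nat and D :: "nat \<Rightarrow> 'a \<Rightarrow> 'a"
  assumes cplx_alg: "cplx_alg emb"
    and is_der: "\<And>a. a < n \<Longrightarrow> is_der emb (D a)"
    and D_commute: "\<And>a b. a < n \<Longrightarrow> b < n \<Longrightarrow> lb (D a) (D b) = (\<lambda>_. 0)"
begin

abbreviation F :: "(nat \<Rightarrow> complex) \<Rightarrow> 'a \<Rightarrow> 'a" where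
  "F \<equiv> Fmap emb n D"

lemma emb_1: "emb 1 = 1"
  and emb_add: "emb (x + y) = emb x + emb y"
  and emb_mult: "emb (x * y) = emb x * emb y"
  using cplx_alg unfolding cplx_alg_def by auto

lemma emb_0: "emb 0 = 0"
  using emb_add[of 0 0] by simp

lemma emb_diff: "emb (x - y) = emb x - emb y"
  by (metis add_diff_cancel emb_add diff_add_cancel)

lemma emb_uminus: "emb (- x) = - emb x"
  using emb_diff[of 0 x] emb_0 by simp

lemma emb_inj:
  assumes "(1::'a) \<noteq> 0" and "emb x = emb y"
  shows "x = y"
proof (rule ccontr)
  assume "x \<noteq> y"
  then have "emb 1 = emb (x - y) * emb (inverse (x - y))"
    by (simp flip: emb_mult)
  also have "\<dots> = 0"
    using assms(2) by (simp add: emb_diff)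
  finally show False
    using assms(1) emb_1 by simp
qed

lemma D_add: "a < n \<Longrightarrow> D a (x + y) = D a x + D a y"
  and D_mult: "a < n \<Longrightarrow> D a (x * y) = x * D a y + y * D a x"
  and D_emb: "a < n \<Longrightarrow> D a (emb z * x) = emb z * D a x"
  using is_der unfolding is_der_def by blast+

lemma D_0: "a < n \<Longrightarrow> D a 0 = 0"
  using D_add[of a 0 0] by simp

lemma D_sum: "a < n \<Longrightarrow> D a (sum f S) = (\<Sum>b\<in>S. D a (f b))"
  by (induct S rule: infinite_finite_induct) (simp_all add: D_0 D_add)

lemma D_D_commute: "a < n \<Longrightarrow> b < n \<Longrightarrow> D a (D b x) = D b (D a x)"
  using D_commute fun_cong[of "lb (D a) (D b)" "\<lambda>_. 0" x] unfolding lb_def by auto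

lemma F_mult: "F c (x * y) = x * F c y + y * F c x"
  by (simp add: Fmap_def D_mult sum.distrib distrib_left sum_distrib_left algebra_simps)

lemma F_1: "F c 1 = 0"
  using F_mult[of c 1 1] by simp

lemma F_diff_scaled: "F (\<lambda>a. x * c a - y * d a) u = emb x * F c u - emb y * F d u"
  by (simp add: Fmap_def emb_diff emb_mult sum_subtractf sum_distrib_left algebra_simps)

lemma F_zero: "F (\<lambda>_. 0) = (\<lambda>_. 0)"
  by (simp add: Fmap_def emb_0 fun_eq_iff)

lemma F_unit_vector:
  assumes "i < n"
  shows "F (\<lambda>a. if a = i then 1 else 0) = D i"
proof
  fix x
  have "emb (if a = i then 1 else 0) * D a x = (if a = i then D a x else 0)" for a
    by (simp add: emb_0 emb_1)
  then show "F (\<lambda>a. if a = i then 1 else 0) x = D i x"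
    using assms by (simp add: Fmap_def)
qed

lemma F_F_commute: "F c (F d x) = F d (F c x)"
proof -
  have F_F: "F c (F d x) = (\<Sum>a<n. \<Sum>b<n. emb (c a) * emb (d b) * D a (D b x))" for c d
    unfolding Fmap_def by (rule sum.cong) (auto simp: D_sum D_emb sum_distrib_left mult.assoc)
  show ?thesis
    unfolding F_F by (subst sum.swap) (auto simp: D_D_commute mult.commute intro!: sum.cong)
qed

lemma lb_mulD_F:
  assumes "F c u' = emb \<mu> * u'" and "F d u = emb \<nu> * u"
  shows "lb (mulD u (F c)) (mulD u' (F d)) = mulD (u * u') (F (\<lambda>a. \<mu> * d a - \<nu> * c a))"
proof
  fix x
  have "lb (mulD u (F c)) (mulD u' (F d)) x =
      u * (u' * F c (F d x) + F d x * F c u') - u' * (u * F d (F c x) + F c x * F d u)"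
    by (simp add: lb_def mulD_def F_mult)
  also have "\<dots> = u * u' * (emb \<mu> * F d x - emb \<nu> * F c x)"
    using assms F_F_commute[of c d x] by (simp add: algebra_simps)
  finally show "lb (mulD u (F c)) (mulD u' (F d)) x = mulD (u * u') (F (\<lambda>a. \<mu> * d a - \<nu> * c a)) x"
    by (simp add: mulD_def F_diff_scaled)
qed

lemma weight_inverse:
  assumes "u * u' = 1" and "F c u = emb \<mu> * u"
  shows "F c u' = emb (- \<mu>) * u'"
proof -
  have "0 = u' * F c (u * u')"
    using assms(1) F_1 by simp
  also have "\<dots> = (u * u') * F c u' + emb \<mu> * u' * (u * u')"
    using assms(2) by (simp add: F_mult algebra_simps)
  also have "\<dots> = F c u' + emb \<mu> * u'"
    using assms(1) by simp
  finally show ?thesis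
    by (simp add: emb_uminus eq_neg_iff_add_eq_0)
qed

lemma weight_mult:
  assumes "F c x = emb \<mu> * x" and "F c y = emb \<nu> * y"
  shows "F c (x * y) = emb (\<mu> + \<nu>) * (x * y)"
  using assms by (simp add: F_mult emb_add algebra_simps)

lemma weight_power:
  assumes "F c x = emb \<mu> * x"
  shows "F c (x ^ m) = emb (of_nat m * \<mu>) * x ^ m"
proof (induct m)
  case 0
  then show ?case by (simp add: F_1 emb_0)
next
  case (Suc m)
  then show ?case
    using weight_mult[OF assms Suc] by (simp add: algebra_simps)
qed

lemma ad_power_mulD_F:
  assumes u: "\<And>c. F c u = emb (root_val n \<beta> c) * u"
    and u\<^sub>0: "\<And>c. F c u\<^sub>0 = emb (root_val n \<beta>\<^sub>0 c) * u\<^sub>0"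
  shows "(lb (mulD u (F g)) ^^ m) (mulD u\<^sub>0 (F g\<^sub>0)) =
    mulD (u ^ m * u\<^sub>0) (F (ad_power_coeff (root_val n \<beta>) (root_val n \<beta>\<^sub>0 g) g g\<^sub>0 m))"
proof (induct m)
  case 0
  then show ?case by simp
next
  case (Suc m)
  have "F g (u ^ m * u\<^sub>0) = emb (root_val n \<beta>\<^sub>0 g + of_nat m * root_val n \<beta> g) * (u ^ m * u\<^sub>0)"
    using weight_mult[OF weight_power[OF u] u\<^sub>0] by (simp add: algebra_simps)
  from lb_mulD_F[OF this u] Suc show ?case
    by (simp add: mult.assoc)
qed

end

lemma root_pair_cases:
  fixes a b p q :: complex
  assumes "a \<noteq> 0" and "b \<noteq> 0" and "- p * b - q * p = 0" and "- p * q - q * a = 0"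
  shows "(p = 0 \<and> q = 0) \<or> (p = - a \<and> q = - b)"
proof -
  have "p * (q + b) = - (- p * b - q * p)" and "q * (p + a) = - (- p * q - q * a)"
    by (simp_all add: algebra_simps)
  then have "p * (q + b) = 0" and "q * (p + a) = 0"
    by (simp_all only: assms(3,4) minus_zero)
  then show ?thesis
    using assms(1,2) by (auto simp: add_eq_0_iff2)
qed

text \<open>\<open>h i\<close> and \<open>k i\<close> are the coordinates of \<open>\<delta>\<^sub>i\<close> and \<open>\<delta>\<^sub>-\<^sub>i\<close>, and \<open>w i\<close> is the inverse
  of \<open>v i\<close>.\<close>
locale root_operators = commuting_derivations +
  fixes r :: nat and alpha :: "nat \<Rightarrow> nat \<Rightarrow> complex" and v w :: "nat \<Rightarrow> 'a"
    and h k :: "nat \<Rightarrow> nat \<Rightarrow> complex"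
  assumes algebra_nontrivial: "(1::'a) \<noteq> 0" and r_le_n: "r \<le> n"
    and v_w_inverse: "\<And>i. i < r \<Longrightarrow> v i * w i = 1"
    and weight_v: "\<And>i c. i < r \<Longrightarrow> F c (v i) = emb (root_val n (alpha i) c) * v i"
    and alpha_diag: "\<And>i. i < r \<Longrightarrow> alpha i i = 2"
    and lb_X_Y_same: "\<And>i. i < r \<Longrightarrow> lb (mulD (v i) (F (h i))) (mulD (w i) (F (k i))) = D i"
    and lb_X_Y_diff: "\<And>i j. i < r \<Longrightarrow> j < r \<Longrightarrow> i \<noteq> j \<Longrightarrow>
      lb (mulD (v i) (F (h i))) (mulD (w j) (F (k j))) = (\<lambda>_. 0)"
begin

abbreviation root :: "nat \<Rightarrow> (nat \<Rightarrow> complex) \<Rightarrow> complex" where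
  "root l \<equiv> root_val n (alpha l)"

lemma weight_w: "i < r \<Longrightarrow> F c (w i) = emb (- root i c) * w i"
  by (rule weight_inverse[OF v_w_inverse weight_v])

lemma root_eqI:
  assumes "l < r" and "F c (v l) = emb x * v l"
  shows "root l c = x"
proof (rule emb_inj[OF algebra_nontrivial])
  have "emb (root l c) * (v l * w l) = emb x * (v l * w l)"
    using assms weight_v[of l c] by (metis mult.assoc)
  then show "emb (root l c) = emb x"
    using v_w_inverse[OF assms(1)] by simp
qed

lemma lb_X_Y:
  assumes "i < r" and "j < r"
  shows "lb (mulD (v i) (F (h i))) (mulD (w j) (F (k j))) =
    mulD (v i * w j) (F (\<lambda>a. - root j (h i) * k j a - root i (k j) * h i a))"
  by (rule lb_mulD_F[OF weight_w[OF assms(2)] weight_v[OF assms(1)]])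

lemma root_lb_X_Y_same:
  assumes "i < r" and "l < r"
  shows "- root i (h i) * root l (k i) - root i (k i) * root l (h i) = alpha l i"
proof -
  define c where "c = (\<lambda>a. - root i (h i) * k i a - root i (k i) * h i a)"
  have "F c = D i"
    using lb_X_Y_same[OF assms(1)] lb_X_Y[OF assms(1,1)] v_w_inverse[OF assms(1)]
    by (simp add: c_def mulD_def)
  also have "D i = F (\<lambda>a. if a = i then 1 else 0)"
    using F_unit_vector assms(1) r_le_n by simp
  finally have "F c (v l) = emb (root l (\<lambda>a. if a = i then 1 else 0)) * v l"
    using weight_v[OF assms(2)] by simp
  also have "root l (\<lambda>a. if a = i then 1 else 0) = alpha l i"
  proof -
    have "(if a = i then 1 else 0) * alpha l a = (if a = i then alpha l a else 0)" for a
      by simp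
    then show ?thesis
      using assms(1) r_le_n by (simp add: root_val_def)
  qed
  finally have "root l c = alpha l i"
    by (rule root_eqI[OF assms(2)])
  then show ?thesis
    unfolding c_def root_val_diff_scaled .
qed

lemma root_lb_X_Y_diff:
  assumes "i < r" and "j < r" and "i \<noteq> j" and "l < r"
  shows "- root j (h i) * root l (k j) - root i (k j) * root l (h i) = 0"
proof -
  define c where "c = (\<lambda>a. - root j (h i) * k j a - root i (k j) * h i a)"
  have unit: "(v i * w j) * (w i * v j) = 1"
    using v_w_inverse assms(1,2) by (metis mult.commute mult.left_commute mult_1_right)
  have "F c = (\<lambda>_. 0)"
    using mulD_unit_eq_zero[OF unit] lb_X_Y_diff[OF assms(1-3)] lb_X_Y[OF assms(1,2)]
    by (simp add: c_def)
  then have "F c (v l) = emb 0 * v l"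
    by (simp add: emb_0)
  then have "root l c = 0"
    by (rule root_eqI[OF assms(4)])
  then show ?thesis
    unfolding c_def root_val_diff_scaled .
qed

lemma root_h_times_root_k:
  assumes "i < r"
  shows "root i (h i) * root i (k i) = -1"
proof -
  have "2 * (root i (h i) * root i (k i) + 1) =
      2 - (- root i (h i) * root i (k i) - root i (k i) * root i (h i))"
    by (simp add: algebra_simps)
  also have "\<dots> = 0"
    using root_lb_X_Y_same[OF assms assms] alpha_diag[OF assms] by simp
  finally show ?thesis
    by (simp add: add_eq_0_iff2)
qed

lemma root_h_cases:
  assumes "i < r" and "j < r" and "i \<noteq> j"
  shows "(root j (h i) = 0 \<and> root i (k j) = 0) \<or>
    (root j (h i) = - root i (h i) \<and> root i (k j) = - root j (k j))"
  using root_pair_cases root_h_times_root_k[OF assms(1)] root_h_times_root_k[OF assms(2)]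
    root_lb_X_Y_diff[OF assms, of j] root_lb_X_Y_diff[OF assms, of i] assms
  by (metis mult_eq_0_iff zero_neq_neg_one)

lemma alpha_off_diag:
  assumes "i < r" and "j < r" and "i \<noteq> j"
  shows "alpha j i = - of_bool (root j (h i) \<noteq> 0) - of_bool (root i (h j) \<noteq> 0)"
proof -
  have ij: "root i (k i) * root j (h i) = of_bool (root j (h i) \<noteq> 0)"
    using root_h_cases[OF assms] root_h_times_root_k[OF assms(1)] by (auto simp: mult.commute)
  have ji: "- root i (h i) * root j (k i) = - of_bool (root i (h j) \<noteq> 0)"
    using root_h_cases[OF assms(2,1) assms(3)[symmetric]] root_h_times_root_k[OF assms(1)]
      root_h_times_root_k[OF assms(2)] by auto
  show ?thesis
    unfolding root_lb_X_Y_same[OF assms(1,2), symmetric] ij ji by (simp add: algebra_simps)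
qed

lemma serre_X:
  assumes "i < r" and "j < r" and "i \<noteq> j"
  shows "(lb (mulD (v i) (F (h i))) ^^ (1 + of_bool (root j (h i) \<noteq> 0) + of_bool (root i (h j) \<noteq> 0)))
    (mulD (v j) (F (h j))) = (\<lambda>_. 0)"
proof -
  have "root j (h i) * (root j (h i) + root i (h i)) = 0"
    using root_h_cases[OF assms] by auto
  then have "ad_power_coeff (root i) (root j (h i)) (h i) (h j)
      (1 + of_bool (root j (h i) \<noteq> 0) + of_bool (root i (h j) \<noteq> 0)) = (\<lambda>_. 0)"
    by (rule ad_power_coeff_vanishes)
  then show ?thesis
    unfolding ad_power_mulD_F[OF weight_v[OF assms(1)] weight_v[OF assms(2)]]
    by (simp add: F_zero mulD_def)
qed

lemma serre_Y:
  assumes "i < r" and "j < r" and "i \<noteq> j"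
  shows "(lb (mulD (w i) (F (k i))) ^^ (1 + of_bool (root j (h i) \<noteq> 0) + of_bool (root i (h j) \<noteq> 0)))
    (mulD (w j) (F (k j))) = (\<lambda>_. 0)"
proof -
  have weight_w': "F c (w l) = emb (root_val n (\<lambda>a. - alpha l a) c) * w l" if "l < r" for l c
    using weight_w[OF that] by (simp add: root_val_uminus)
  have ij: "root i (k j) = 0 \<longleftrightarrow> root j (h i) = 0"
    using root_h_cases[OF assms] root_h_times_root_k[OF assms(1)] root_h_times_root_k[OF assms(2)]
    by auto
  have ji: "root j (k i) = 0 \<longleftrightarrow> root i (h j) = 0"
    using root_h_cases[OF assms(2,1) assms(3)[symmetric]] root_h_times_root_k[OF assms(1)]
      root_h_times_root_k[OF assms(2)] by auto
  have "- root j (k i) * (- root j (k i) + root_val n (\<lambda>a. - alpha i a) (k i)) = 0"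
    using root_h_cases[OF assms(2,1) assms(3)[symmetric]] by (auto simp: root_val_uminus)
  from ad_power_coeff_vanishes[OF this, of "k j"]
  have "ad_power_coeff (root_val n (\<lambda>a. - alpha i a)) (- root j (k i)) (k i) (k j)
      (1 + of_bool (root j (h i) \<noteq> 0) + of_bool (root i (h j) \<noteq> 0)) = (\<lambda>_. 0)"
    using ij ji by (simp add: root_val_uminus add.commute)
  then show ?thesis
    unfolding ad_power_mulD_F[OF weight_w'[OF assms(1)] weight_w'[OF assms(2)]] root_val_uminus
    by (simp add: F_zero mulD_def)
qed

lemma nat_one_minus_cartan_entry:
  assumes "i < r" and "j < r" and "i \<noteq> j" and "alpha j i = of_int Nij"
  shows "nat (1 - Nij) = 1 + of_bool (root j (h i) \<noteq> 0) + of_bool (root i (h j) \<noteq> 0)"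
proof -
  have "of_int Nij = (of_int (- of_bool (root j (h i) \<noteq> 0) - of_bool (root i (h j) \<noteq> 0)) :: complex)"
    using alpha_off_diag[OF assms(1-3)] assms(4) by simp
  then have "Nij = - of_bool (root j (h i) \<noteq> 0) - of_bool (root i (h j) \<noteq> 0)"
    by (simp only: of_int_eq_iff)
  then show ?thesis
    by simp
qed

lemma rels_de:
  assumes "\<forall>i<r. \<forall>j<r. alpha j i = of_int (N i j)"
    and "\<forall>i<r. dp i = F (h i)" and "\<forall>i<r. dm i = F (k i)"
  shows "rels_de r N v dp dm"
  unfolding rels_de_def Let_def
proof (intro conjI allI impI)
  fix i j assume ij: "i < r" "j < r" "i \<noteq> j"
  note exponent = nat_one_minus_cartan_entry[OF ij, of "N i j"]
  show "(lb (mulD (v i) (dp i)) ^^ nat (1 - N i j)) (mulD (v j) (dp j)) = (\<lambda>_. 0)"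
    using serre_X[OF ij] exponent assms ij by simp
  show "(lb (mulD (rinv (v i)) (dm i)) ^^ nat (1 - N i j)) (mulD (rinv (v j)) (dm j)) = (\<lambda>_. 0)"
    using serre_Y[OF ij] exponent assms ij rinv_eqI[OF v_w_inverse] by simp
qed

end

lemma all_zero_if_one_eq_zero:
  assumes "(1::'a::comm_ring_1) = 0"
  shows "(f :: 'b \<Rightarrow> 'a) = (\<lambda>_. 0)"
  using assms by (metis mult_1 mult_zero_left)

lemma rels_de_if_rels_abc:
  fixes emb :: "complex \<Rightarrow> 'a::comm_ring_1"
  assumes "gen_cartan r N" and alpha_N: "\<forall>i<r. \<forall>j<r. alpha j i = of_int (N i j)"
    and "commuting_derivations emb n D" and "r \<le> n"
    and w: "\<forall>i<r. v i * w i = 1"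
    and "\<forall>i<r. \<forall>c. Fmap emb n D c (v i) = emb (root_val n (alpha i) c) * v i"
    and h: "\<forall>i<r. dp i = Fmap emb n D (h i)" and k: "\<forall>i<r. dm i = Fmap emb n D (k i)"
    and R: "rels_abc emb r s D alpha v dp dm"
  shows "rels_de r N v dp dm"
proof (cases "(1::'a) = 0")
  case True
  then show ?thesis
    unfolding rels_de_def Let_def using all_zero_if_one_eq_zero by blast
next
  case False
  have rinv_v: "\<forall>i<r. rinv (v i) = w i"
    using w rinv_eqI by blast
  interpret root_operators emb n D r alpha v w h k
  proof unfold_locales
    show "i < r \<Longrightarrow> alpha i i = 2" for i
      using assms(1) alpha_N unfolding gen_cartan_def by simp
    show "i < r \<Longrightarrow> lb (mulD (v i) (Fmap emb n D (h i))) (mulD (w i) (Fmap emb n D (k i))) = D i" for i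
      using R h k rinv_v unfolding rels_abc_def Let_def by simp
    show "i < r \<Longrightarrow> j < r \<Longrightarrow> i \<noteq> j \<Longrightarrow>
        lb (mulD (v i) (Fmap emb n D (h i))) (mulD (w j) (Fmap emb n D (k j))) = (\<lambda>_. 0)" for i j
      using R h k rinv_v unfolding rels_abc_def Let_def by simp
  qed (use assms(3-6) False in \<open>simp_all add: commuting_derivations_def\<close>)
  show ?thesis
    using rels_de alpha_N h k by blast
qed

theorem corollary3p13:
  fixes r s :: nat and N :: "nat \<Rightarrow> nat \<Rightarrow> int"
    and alpha :: "nat \<Rightarrow> nat \<Rightarrow> complex"
    and emb :: "complex \<Rightarrow> 'a::comm_ring_1"
    and D :: "nat \<Rightarrow> 'a \<Rightarrow> 'a" and v :: "nat \<Rightarrow> 'a"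
  assumes "gen_cartan r N"
    and "s = corank r N"
    and "lin_indep_fam alpha {..<r} (r + s)"
    and "\<forall>i<r. \<forall>j<r. alpha j i = of_int (N i j)"
    and "cplx_alg emb"
    and "\<forall>a<r+s. is_der emb (D a)"
    and "\<forall>a<r+s. \<forall>b<r+s. lb (D a) (D b) = (\<lambda>_. 0)"
    and "\<forall>i<r. \<exists>w. v i * w = 1"
    and "\<forall>i<r. \<forall>c. Fmap emb (r+s) D c (v i) = emb (\<Sum>a<r+s. c a * alpha i a) * v i"
  shows "problem1 emb r s N D alpha v \<longleftrightarrow> problem2 emb r s D alpha v"
proof
  assume "problem2 emb r s D alpha v"
  then obtain dp dm where Im: "\<forall>i<r. dp i \<in> ImF emb (r+s) D \<and> dm i \<in> ImF emb (r+s) D"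
    and R: "rels_abc emb r s D alpha v dp dm"
    unfolding problem2_def by blast
  have "\<forall>i. \<exists>c c'. i < r \<longrightarrow> dp i = Fmap emb (r+s) D c \<and> dm i = Fmap emb (r+s) D c'"
    using Im unfolding ImF_def by blast
  then obtain h k where h: "\<forall>i<r. dp i = Fmap emb (r+s) D (h i)"
    and k: "\<forall>i<r. dm i = Fmap emb (r+s) D (k i)"
    by metis
  obtain w where w: "\<forall>i<r. v i * w i = 1"
    using assms(8) by metis
  have derivations: "commuting_derivations emb (r+s) D"
    using assms(5-7) by unfold_locales simp_all
  have weight: "\<forall>i<r. \<forall>c. Fmap emb (r+s) D c (v i) = emb (root_val (r+s) (alpha i) c) * v i"
    using assms(9) by (simp add: root_val_def)
  have "rels_de r N v dp dm"
    using rels_de_if_rels_abc[OF assms(1,4) derivations le_add1 w weight h k R] .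
  with Im R show "problem1 emb r s N D alpha v"
    unfolding problem1_def by blast
qed (auto simp: problem1_def problem2_def)

end
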